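(* Let $\alpha\in\Phi_+$ and, for each $s\in\mathbb{F}_q^\times$, let $\lambda_{\alpha,s}$ be any linear character of $V_\alpha$ with $\lambda_{\alpha,s}|_{X_\alpha}=\varphi_{\alpha,s}$ and $X_\gamma\subseteq\ker(\lambda_{\alpha,s})$ for all $\gamma\in\Phi_+$ with $\operatorname{ht}(\gamma)>\operatorname{ht}(\alpha)$ (such characters exist). Then the induced characters $\mu_{\alpha,s}:=\lambda_{\alpha,s}^U$, $s\in\mathbb{F}_q^\times$, are $q-1$ pairwise distinct irreducible characters of $U$, and $\mu_{\alpha,s}|_{X_\alpha}=\mu_{\alpha,s}(1)\cdot\varphi_{\alpha,s}$.
   Context: $q$ is a power of a prime $p$. $\Phi$ is a root system of type $D_4$ with simple roots $\alpha_1,\alpha_2,\alpha_3,\alpha_4$ ($\alpha_3$ central node), positive roots $\Phi_+=\{\alpha_1,\dots,\alpha_{12}\}$ with $\alpha_5=\alpha_1+\alpha_3$, $\alpha_6=\alpha_2+\alpha_3$, $\alpha_7=\alpha_3+\alpha_4$, $\alpha_8=\alpha_1+\alpha_2+\alpha_3$, $\alpha_9=\alpha_1+\alpha_3+\alpha_4$, $\alpha_{10}=\alpha_2+\alpha_3+\alpha_4$, $\alpha_{11}=\alpha_1+\alpha_2+\alpha_3+\alpha_4$, $\alpha_{12}=\alpha_1+\alpha_2+2\alpha_3+\alpha_4$; $\operatorname{ht}$ is the height. $U=U(q)$ is the Sylow $p$-subgroup of the Chevalley group $D_4(q)$ generated by $x_i(t)$ ($i=1,\dots,12$, $t\in\mathbb{F}_q$),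 with $x_i(t)x_i(u)=x_i(t+u)$, each element uniquely $x_1(d_1)\cdots x_{12}(d_{12})$, and commutators ($[a,b]=a^{-1}b^{-1}ab$): $[x_1(t),x_3(u)]=x_5(tu)$, $[x_1(t),x_6(u)]=x_8(-tu)$, $[x_1(t),x_7(u)]=x_9(tu)$, $[x_1(t),x_{10}(u)]=x_{11}(-tu)$, $[x_2(t),x_3(u)]=x_6(tu)$, $[x_2(t),x_5(u)]=x_8(-tu)$, $[x_2(t),x_7(u)]=x_{10}(tu)$, $[x_2(t),x_9(u)]=x_{11}(-tu)$, $[x_3(t),x_4(u)]=x_7(tu)$, $[x_3(t),x_{11}(u)]=x_{12}(-tu)$, $[x_4(t),x_5(u)]=x_9(-tu)$, $[x_4(t),x_6(u)]=x_{10}(-tu)$, $[x_4(t),x_8(u)]=x_{11}(-tu)$, $[x_5(t),x_{10}(u)]=x_{12}(-tu)$, $[x_6(t),x_9(u)]=x_{12}(-tu)$, $[x_7(t),x_8(u)]=x_{12}(tu)$, others trivial. $X_{\alpha_i}=\{x_i(t)\}$. Fix a nontrivial linear character $\phi$ of $(\mathbb{F}_q,+)$; $\varphi_{\alpha_i,s}(x_i(d))=\phi(sd)$. Hooks: $h_\alpha=\{\gamma\in\Phi_+:\exists\gamma'\in\Phi_+\cup\{0\},\ \gamma+\gamma'=\alpha\}$; $\operatorname{arm}(h_\alpha)=(h_\alpha\cap h_{\alpha_{12}})\setminus\{\alpha\}$ if $\alpha\neq\alpha_{12}$, $\operatorname{arm}(h_{\alpha_{12}})=\{\alpha_8,\alpha_9,\alpha_{10},\alpha_{11}\}$;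 $\operatorname{leg}(h_\alpha)=h_\alpha\setminus(\operatorname{arm}(h_\alpha)\cup\{\alpha\})$. $V_\alpha=\prod_{\gamma\in\Phi_+\setminus\operatorname{leg}(h_\alpha)}X_\gamma$, a subgroup of $U$. $\chi^U$ denotes induction to $U$. *)

theory Defs
  imports "HOL-Algebra.Group" "Jordan_Normal_Form.Matrix"
begin

definition rc :: "nat \<Rightarrow> int list" where
  "rc i = (if i = 1 then [1,0,0,0] else if i = 2 then [0,1,0,0]
      else if i = 3 then [0,0,1,0] else if i = 4 then [0,0,0,1]
      else if i = 5 then [1,0,1,0] else if i = 6 then [0,1,1,0]
      else if i = 7 then [0,0,1,1] else if i = 8 then [1,1,1,0]
      else if i = 9 then [1,0,1,1] else if i = 10 then [0,1,1,1]
      else if i = 11 then [1,1,1,1] else if i = 12 then [1,1,2,1] else [0,0,0,0])"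

definition posroots :: "nat set" where "posroots = {1..12}"

definition ht :: "nat \<Rightarrow> int" where "ht i = sum_list (rc i)"

text \<open>hook h_a: gamma positive with a = gamma + gamma', gamma' positive root or 0\<close>
definition hook :: "nat \<Rightarrow> nat set" where
  "hook a = {g \<in> posroots. rc g = rc a \<or> (\<exists>g' \<in> posroots. map2 (+) (rc g) (rc g') = rc a)}"

definition arm :: "nat \<Rightarrow> nat set" where
  "arm a = (if a = 12 then {8,9,10,11} else (hook a \<inter> hook 12) - {a})"

definition leg :: "nat \<Rightarrow> nat set" where
  "leg a = hook a - (arm a \<union> {a})"

definition comm :: "('g, 'b) monoid_scheme \<Rightarrow> 'g \<Rightarrow> 'g \<Rightarrow> 'g" where
  "comm G a b = inv\<^bsub>G\<^esub> a \<otimes>\<^bsub>G\<^esub> inv\<^bsub>G\<^esub> b \<otimes>\<^bsub>G\<^esub> a \<otimes>\<^bsub>G\<^esub> b"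

text \<open>Commutator table: cr i j = Some (k, c) means [x_i(t), x_j(u)] = x_k(c t u); None means trivial.\<close>
definition cr :: "nat \<Rightarrow> nat \<Rightarrow> (nat \<times> int) option" where
  "cr i j = (if (i,j) = (1,3) then Some (5,1) else if (i,j) = (1,6) then Some (8,-1)
     else if (i,j) = (1,7) then Some (9,1) else if (i,j) = (1,10) then Some (11,-1)
     else if (i,j) = (2,3) then Some (6,1) else if (i,j) = (2,5) then Some (8,-1)
     else if (i,j) = (2,7) then Some (10,1) else if (i,j) = (2,9) then Some (11,-1)
     else if (i,j) = (3,4) then Some (7,1) else if (i,j) = (3,11) then Some (12,-1)
     else if (i,j) = (4,5) then Some (9,-1) else if (i,j) = (4,6) then Some (10,-1)
     else if (i,j) = (4,8) then Some (11,-1) else if (i,j) = (5,10) then Some (12,-1)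
     else if (i,j) = (6,9) then Some (12,-1) else if (i,j) = (7,8) then Some (12,1)
     else None)"

definition nf :: "('g, 'b) monoid_scheme \<Rightarrow> (nat \<Rightarrow> 'a \<Rightarrow> 'g) \<Rightarrow> (nat \<Rightarrow> 'a) \<Rightarrow> 'g" where
  "nf G x d = foldr (\<lambda>i r. x i (d i) \<otimes>\<^bsub>G\<^esub> r) [1..<13] \<one>\<^bsub>G\<^esub>"

definition coords :: "(nat \<Rightarrow> 'a::zero) set" where
  "coords = {d. \<forall>i. i \<notin> {1..12} \<longrightarrow> d i = 0}"

text \<open>G (with root elements x) is the Sylow p-subgroup U(q) of D4(q) in Chevalley presentation.\<close>
definition is_U_D4 :: "('g, 'b) monoid_scheme \<Rightarrow> (nat \<Rightarrow> 'a::{field,finite} \<Rightarrow> 'g) \<Rightarrow> bool" where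
  "is_U_D4 G x \<longleftrightarrow> group G
     \<and> (\<forall>i \<in> {1..12}. \<forall>t. x i t \<in> carrier G)
     \<and> (\<forall>i \<in> {1..12}. \<forall>t u. x i t \<otimes>\<^bsub>G\<^esub> x i u = x i (t + u))
     \<and> bij_betw (nf G x) coords (carrier G)
     \<and> (\<forall>i \<in> {1..12}. \<forall>j \<in> {1..12}. i < j \<longrightarrow> (\<forall>t u.
          comm G (x i t) (x j u) =
            (case cr i j of Some (k, c) \<Rightarrow> x k (of_int c * t * u) | None \<Rightarrow> \<one>\<^bsub>G\<^esub>)))"

text \<open>V_alpha = product of X_gamma over gamma not in leg(h_alpha)\<close>
definition Vsub :: "('g, 'b) monoid_scheme \<Rightarrow> (nat \<Rightarrow> 'a::zero \<Rightarrow> 'g) \<Rightarrow> nat \<Rightarrow> 'g set" where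
  "Vsub G x a = nf G x ` {d \<in> coords. \<forall>g \<in> leg a. d g = 0}"

definition nontriv_add_char :: "('a::field \<Rightarrow> complex) \<Rightarrow> bool" where
  "nontriv_add_char \<phi> \<longleftrightarrow> (\<forall>a b. \<phi> (a + b) = \<phi> a * \<phi> b) \<and> (\<forall>a. \<phi> a \<noteq> 0) \<and> (\<exists>a. \<phi> a \<noteq> 1)"

definition linear_char :: "('g, 'b) monoid_scheme \<Rightarrow> 'g set \<Rightarrow> ('g \<Rightarrow> complex) \<Rightarrow> bool" where
  "linear_char G H l \<longleftrightarrow> (\<forall>g \<in> H. \<forall>h \<in> H. l (g \<otimes>\<^bsub>G\<^esub> h) = l g * l h) \<and> (\<forall>g \<in> H. l g \<noteq> 0)"

definition induce :: "('g, 'b) monoid_scheme \<Rightarrow> 'g set \<Rightarrow> ('g \<Rightarrow> complex) \<Rightarrow> 'g \<Rightarrow> complex" where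
  "induce G H f g = (if g \<in> carrier G then
      (1 / of_nat (card H)) * (\<Sum>y \<in> carrier G.
         (if inv\<^bsub>G\<^esub> y \<otimes>\<^bsub>G\<^esub> g \<otimes>\<^bsub>G\<^esub> y \<in> H then f (inv\<^bsub>G\<^esub> y \<otimes>\<^bsub>G\<^esub> g \<otimes>\<^bsub>G\<^esub> y) else 0))
    else 0)"

definition is_rep :: "('g, 'b) monoid_scheme \<Rightarrow> nat \<Rightarrow> ('g \<Rightarrow> complex mat) \<Rightarrow> bool" where
  "is_rep G n \<rho> \<longleftrightarrow> (\<forall>g \<in> carrier G. \<rho> g \<in> carrier_mat n n)
     \<and> (\<forall>g \<in> carrier G. \<forall>h \<in> carrier G. \<rho> (g \<otimes>\<^bsub>G\<^esub> h) = \<rho> g * \<rho> h)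
     \<and> \<rho> \<one>\<^bsub>G\<^esub> = 1\<^sub>m n"

definition is_subspace :: "nat \<Rightarrow> complex vec set \<Rightarrow> bool" where
  "is_subspace n W \<longleftrightarrow> W \<subseteq> carrier_vec n \<and> 0\<^sub>v n \<in> W
     \<and> (\<forall>v \<in> W. \<forall>w \<in> W. v + w \<in> W) \<and> (\<forall>c. \<forall>v \<in> W. c \<cdot>\<^sub>v v \<in> W)"

definition irreducible_rep :: "('g, 'b) monoid_scheme \<Rightarrow> nat \<Rightarrow> ('g \<Rightarrow> complex mat) \<Rightarrow> bool" where
  "irreducible_rep G n \<rho> \<longleftrightarrow> is_rep G n \<rho> \<and> n > 0
     \<and> (\<forall>W. is_subspace n W \<and> (\<forall>g \<in> carrier G. \<forall>w \<in> W. \<rho> g *\<^sub>v w \<in> W)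
            \<longrightarrow> W = {0\<^sub>v n} \<or> W = carrier_vec n)"

definition mat_trace :: "complex mat \<Rightarrow> complex" where
  "mat_trace A = (\<Sum>i < dim_row A. A $$ (i, i))"

definition irreducible_char :: "('g, 'b) monoid_scheme \<Rightarrow> ('g \<Rightarrow> complex) \<Rightarrow> bool" where
  "irreducible_char G \<chi> \<longleftrightarrow> (\<exists>n \<rho>. irreducible_rep G n \<rho> \<and> (\<forall>g \<in> carrier G. \<chi> g = mat_trace (\<rho> g)))"

end

theory Submission
  imports Defs "HOL-Algebra.Coset"
begin

text \<open>
  The proof has three layers.
  \<^item> General group theory: for a linear character \<open>l\<close> of a subgroup \<open>H\<close> of a finite group \<open>G\<close>
    we realise \<open>l\<^sup>G\<close> by monomial matrices and prove Mackey's criterion: if every \<open>y \<notin> H\<close> conjugates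
    some \<open>w \<in> H\<close> into \<open>H\<close> while changing the value of \<open>l\<close>, then \<open>l\<^sup>G\<close> is irreducible.  We also
    note that \<open>l\<^sup>G(g) = l\<^sup>G(1) c\<close> whenever all conjugates of \<open>g\<close> lie in \<open>H\<close> with \<open>l\<close>-value \<open>c\<close>.
  \<^item> The group \<open>U\<close>: normal-form coordinates, in which products, inverses and conjugates of root
    elements are explicit polynomials; the root data (heights, hooks, legs); and the subgroups \<open>V\<^sub>\<alpha>\<close>.
  \<^item> The character \<open>\<lambda>\<close>: conjugating \<open>x\<^sub>\<alpha>(t)\<close> only adds root elements of larger height, so all its
    conjugates have \<open>\<lambda>\<close>-value \<open>\<phi>(st)\<close>; and every element outside \<open>V\<^sub>\<alpha>\<close> has a nonzero leg coordinate,
    which conjugation of a suitable arm root element turns into a nontrivial factor \<open>\<phi>(s c v)\<close>,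
    giving Mackey's condition.  Distinctness follows because \<open>\<phi>\<close> separates the scalars \<open>s\<close>.
\<close>

section \<open>Induced characters and Mackey's irreducibility criterion\<close>

context group begin

lemma mult_inv_cancel_left [simp]: "b \<in> carrier G \<Longrightarrow> c \<in> carrier G \<Longrightarrow> b \<otimes> (inv b \<otimes> c) = c"
  by (simp add: m_assoc[symmetric])

lemma inv_mult_cancel_left [simp]: "b \<in> carrier G \<Longrightarrow> c \<in> carrier G \<Longrightarrow> inv b \<otimes> (b \<otimes> c) = c"
  by (simp add: m_assoc[symmetric])

lemma commutator_swap: "a \<in> carrier G \<Longrightarrow> b \<in> carrier G \<Longrightarrow> b \<otimes> a = a \<otimes> (b \<otimes> inv (comm G a b))"
  unfolding comm_def by (simp add: inv_mult_group m_assoc)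

end

definition mackey_condition :: "('g, 'b) monoid_scheme \<Rightarrow> 'g set \<Rightarrow> ('g \<Rightarrow> complex) \<Rightarrow> bool" where
  "mackey_condition G H l \<longleftrightarrow> (\<forall>y \<in> carrier G - H. \<exists>w \<in> H.
     inv\<^bsub>G\<^esub> y \<otimes>\<^bsub>G\<^esub> w \<otimes>\<^bsub>G\<^esub> y \<in> H \<and> l (inv\<^bsub>G\<^esub> y \<otimes>\<^bsub>G\<^esub> w \<otimes>\<^bsub>G\<^esub> y) \<noteq> l w)"

locale subgroup_char = group G + H: subgroup H G for G (structure) and H +
  fixes l :: "'a \<Rightarrow> complex"
  assumes finite_carrier: "finite (carrier G)"
    and linear: "linear_char G H l"
begin

lemma finite_H: "finite H"
  using finite_carrier H.subset by (rule finite_subset[rotated])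

lemma card_H_pos: "card H > 0"
  using finite_H H.one_closed card_gt_0_iff by blast

lemma l_mult: "a \<in> H \<Longrightarrow> b \<in> H \<Longrightarrow> l (a \<otimes> b) = l a * l b"
  using linear unfolding linear_char_def by blast

lemma l_nonzero: "a \<in> H \<Longrightarrow> l a \<noteq> 0"
  using linear unfolding linear_char_def by blast

lemma l_one [simp]: "l \<one> = 1"
  using l_mult[OF H.one_closed H.one_closed] l_nonzero[OF H.one_closed] by simp

lemma l_inverse: "a \<in> H \<Longrightarrow> l (inv a) = inverse (l a)"
proof -
  assume a: "a \<in> H"
  have "l a * l (inv a) = 1" using l_mult[OF a H.m_inv_closed[OF a]] a by simp
  then show ?thesis by (simp add: inverse_unique)
qed

lemma mult_H_right: "g \<in> carrier G \<Longrightarrow> h \<in> H \<Longrightarrow> g \<otimes> h \<in> H \<longleftrightarrow> g \<in> H"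
  by (metis H.m_closed H.m_inv_closed H.mem_carrier m_assoc r_inv r_one)

lemma mult_H_left: "g \<in> carrier G \<Longrightarrow> h \<in> H \<Longrightarrow> h \<otimes> g \<in> H \<longleftrightarrow> g \<in> H"
  by (metis H.m_closed H.m_inv_closed H.mem_carrier inv_mult_cancel_left)

definition l0 :: "'a \<Rightarrow> complex" where "l0 g = (if g \<in> H then l g else 0)"

lemma l0_mult_right: "g \<in> carrier G \<Longrightarrow> h \<in> H \<Longrightarrow> l0 (g \<otimes> h) = l0 g * l h"
  unfolding l0_def using mult_H_right l_mult by auto

lemma l0_conj: "g \<in> carrier G \<Longrightarrow> h \<in> H \<Longrightarrow> l0 (inv h \<otimes> g \<otimes> h) = l0 g"
  unfolding l0_def using mult_H_left[OF _ H.m_inv_closed] mult_H_right l_mult l_inverse l_nonzero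
  by (auto simp: H.m_inv_closed)

lemma induce_l0: "g \<in> carrier G \<Longrightarrow>
    induce G H l g = (1 / of_nat (card H)) * (\<Sum>y \<in> carrier G. l0 (inv y \<otimes> g \<otimes> y))"
  unfolding induce_def l0_def by simp

lemma induce_one: "induce G H l \<one> = of_nat (card (carrier G)) / of_nat (card H)"
  by (simp add: induce_l0 l0_def H.one_closed)

lemma induce_one_nonzero: "induce G H l \<one> \<noteq> 0"
  using card_H_pos finite_carrier by (auto simp: induce_one card_gt_0_iff)

lemma induce_constant_on_class:
  assumes "g \<in> carrier G" and "\<And>y. y \<in> carrier G \<Longrightarrow> inv y \<otimes> g \<otimes> y \<in> H \<and> l (inv y \<otimes> g \<otimes> y) = c"
  shows "induce G H l g = induce G H l \<one> * c"
  using assms by (simp add: induce_l0 induce_one l0_def)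

definition left_transversal :: "'a list \<Rightarrow> bool" where
  "left_transversal ts \<longleftrightarrow> distinct ts \<and> ts \<noteq> [] \<and> ts ! 0 = \<one> \<and> set ts \<subseteq> carrier G \<and>
     (\<forall>g \<in> carrier G. \<exists>!i. i < length ts \<and> inv (ts ! i) \<otimes> g \<in> H)"

lemma left_transversal_exists: "\<exists>ts. left_transversal ts"
proof -
  define R where "R = rcong H"
  have R: "equiv (carrier G) R" unfolding R_def by (rule H.equiv_rcong[OF is_group])
  have R_iff: "(g, h) \<in> R \<longleftrightarrow> g \<in> carrier G \<and> h \<in> carrier G \<and> inv g \<otimes> h \<in> H" for g h
    unfolding R_def r_congruent_def by simp
  define rep where "rep g = (if g \<in> H then \<one> else SOME h. (h, g) \<in> R)" for g
  have rep_rel: "(rep g, g) \<in> R" if g: "g \<in> carrier G" for g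
  proof (cases "g \<in> H")
    case True then show ?thesis using g by (simp add: rep_def R_iff)
  next
    case False
    have "(g, g) \<in> R" using R g by (simp add: equiv_def refl_on_def)
    then show ?thesis using False unfolding rep_def by (auto intro: someI)
  qed
  have rep_eq: "rep g = rep g'" if "(g, g') \<in> R" for g g'
  proof -
    have "(h, g) \<in> R \<longleftrightarrow> (h, g') \<in> R" for h
      using R that by (meson equiv_def sym_def trans_def)
    moreover have "g \<in> H \<longleftrightarrow> g' \<in> H"
      using that calculation[of \<one>] by (simp add: R_iff)
    ultimately show ?thesis unfolding rep_def by simp
  qed
  define T where "T = rep ` carrier G"
  have T_carrier: "T \<subseteq> carrier G" using rep_rel R_iff unfolding T_def by blast
  have one_T: "\<one> \<in> T" unfolding T_def rep_def using H.one_closed by force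
  have in_class_iff: "inv t \<otimes> g \<in> H \<longleftrightarrow> t = rep g" if t: "t \<in> T" and g: "g \<in> carrier G" for t g
  proof
    obtain g0 where g0: "g0 \<in> carrier G" "t = rep g0" using t unfolding T_def by blast
    assume "inv t \<otimes> g \<in> H"
    then have "(t, g) \<in> R" using t g T_carrier R_iff by blast
    then have "(g0, g) \<in> R" using rep_rel[OF g0(1)] R g0(2) by (meson equiv_def sym_def trans_def)
    then show "t = rep g" using rep_eq g0(2) by simp
  qed (use rep_rel[OF g] R_iff in simp)
  obtain xs where xs: "distinct xs" "set xs = T - {\<one>}"
    using finite_distinct_list finite_subset[OF T_carrier finite_carrier] by (metis finite_Diff)
  define ts where "ts = \<one> # xs"
  have set_ts: "set ts = T" and distinct_ts: "distinct ts" unfolding ts_def using xs one_T by auto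
  have "\<exists>!i. i < length ts \<and> inv (ts ! i) \<otimes> g \<in> H" if g: "g \<in> carrier G" for g
  proof -
    have "\<exists>!i. i < length ts \<and> ts ! i = rep g"
      using distinct_ts set_ts g unfolding T_def by (intro distinct_Ex1) auto
    moreover have "(\<lambda>i. i < length ts \<and> inv (ts ! i) \<otimes> g \<in> H) = (\<lambda>i. i < length ts \<and> ts ! i = rep g)"
      using in_class_iff[OF _ g] set_ts nth_mem by blast
    ultimately show ?thesis by simp
  qed
  moreover have "set ts \<subseteq> carrier G" using set_ts T_carrier by simp
  ultimately have "left_transversal ts" using distinct_ts unfolding left_transversal_def by (simp add: ts_def)
  then show ?thesis ..
qed

end

subsection \<open>The induced representation\<close>

lemma subspace_finsum:
  assumes W: "is_subspace n W" and S: "finite S" and v: "\<And>k. k \<in> S \<Longrightarrow> v k \<in> W"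
  shows "finsum_vec TYPE(complex) n v S \<in> W"
  using S v
proof (induction S rule: finite_induct)
  case empty then show ?case using W by (simp add: finsum_vec_empty is_subspace_def)
next
  case (insert k S)
  have "v \<in> insert k S \<rightarrow> carrier_vec n" using insert.prems W unfolding is_subspace_def by blast
  then show ?case using insert W unfolding is_subspace_def by (simp add: finsum_vec_insert)
qed

lemma vec_unit_expansion:
  assumes v: "v \<in> carrier_vec n"
  shows "v = finsum_vec TYPE(complex) n (\<lambda>k. v $ k \<cdot>\<^sub>v unit_vec n k) {0..<n}" (is "v = ?s")
proof (rule eq_vecI)
  have s: "?s \<in> carrier_vec n" by (rule finsum_vec_closed) auto
  then show "dim_vec v = dim_vec ?s" using v by simp
  fix i assume "i < dim_vec ?s"
  then have i: "i < n" using s by simp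
  have "?s $ i = (\<Sum>k \<in> {0..<n}. (v $ k \<cdot>\<^sub>v unit_vec n k) $ i)"
    by (rule index_finsum_vec) (use i in auto)
  also have "\<dots> = (\<Sum>k \<in> {0..<n}. if k = i then v $ k else 0)"
    by (rule sum.cong) (use i in auto)
  finally show "v $ i = ?s $ i" using i by simp
qed

lemma sum_single:
  assumes "k0 \<in> A" "finite A" "\<And>k. k \<in> A \<Longrightarrow> k \<noteq> k0 \<Longrightarrow> f k = 0"
  shows "sum f A = f k0"
  using assms sum.remove[of A k0 f] by (simp add: sum.neutral)

text \<open>The induced representation, realised by monomial matrices with respect to a left transversal.\<close>

locale induced_rep = subgroup_char +
  fixes ts :: "'a list"
  assumes transversal: "left_transversal ts"
begin

abbreviation n :: nat where "n \<equiv> length ts"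

lemma ts_closed [simp]: "i < n \<Longrightarrow> ts ! i \<in> carrier G"
  using transversal unfolding left_transversal_def by (meson nth_mem subsetD)

lemma ts_first [simp]: "ts ! 0 = \<one>" and n_pos: "0 < n"
  using transversal unfolding left_transversal_def by auto

lemma ts_coset: "g \<in> carrier G \<Longrightarrow> \<exists>!i. i < n \<and> inv (ts ! i) \<otimes> g \<in> H"
  using transversal unfolding left_transversal_def by blast

lemma ts_coset_iff: "i < n \<Longrightarrow> j < n \<Longrightarrow> inv (ts ! i) \<otimes> ts ! j \<in> H \<longleftrightarrow> i = j"
  using ts_coset[OF ts_closed, of j] H.one_closed by auto

definition rho :: "'a \<Rightarrow> complex mat" where
  "rho g = mat n n (\<lambda>(i, j). l0 (inv (ts ! i) \<otimes> g \<otimes> ts ! j))"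

lemma rho_index [simp]: "i < n \<Longrightarrow> j < n \<Longrightarrow> rho g $$ (i, j) = l0 (inv (ts ! i) \<otimes> g \<otimes> ts ! j)"
  and rho_carrier [simp]: "rho g \<in> carrier_mat n n" "dim_row (rho g) = n" "dim_col (rho g) = n"
  unfolding rho_def by auto

lemma rho_apply: "v \<in> carrier_vec n \<Longrightarrow> i < n \<Longrightarrow>
    (rho g *\<^sub>v v) $ i = (\<Sum>k \<in> {0..<n}. l0 (inv (ts ! i) \<otimes> g \<otimes> ts ! k) * v $ k)"
  by (simp add: scalar_prod_def)

lemma rho_mult:
  assumes g: "g \<in> carrier G" and h: "h \<in> carrier G"
  shows "rho (g \<otimes> h) = rho g * rho h"
proof (rule eq_matI)
  fix i j assume "i < dim_row (rho g * rho h)" "j < dim_col (rho g * rho h)"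
  then have i: "i < n" and j: "j < n" by simp_all
  have "\<exists>!k. k < n \<and> inv (ts ! k) \<otimes> (h \<otimes> ts ! j) \<in> H" using h j by (intro ts_coset) simp
  then obtain k0 where k0: "k0 < n" "inv (ts ! k0) \<otimes> (h \<otimes> ts ! j) \<in> H"
    and k0_unique: "\<And>k. k < n \<Longrightarrow> inv (ts ! k) \<otimes> (h \<otimes> ts ! j) \<in> H \<Longrightarrow> k = k0"
    by blast
  have "(rho g * rho h) $$ (i, j)
      = (\<Sum>k \<in> {0..<n}. l0 (inv (ts ! i) \<otimes> g \<otimes> ts ! k) * l0 (inv (ts ! k) \<otimes> h \<otimes> ts ! j))"
    using i j by (simp add: scalar_prod_def)
  also have "\<dots> = l0 (inv (ts ! i) \<otimes> g \<otimes> ts ! k0) * l0 (inv (ts ! k0) \<otimes> h \<otimes> ts ! j)"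
  proof (rule sum_single)
    fix k assume k: "k \<in> {0..<n}" "k \<noteq> k0"
    then have "inv (ts ! k) \<otimes> h \<otimes> ts ! j \<notin> H" using k0_unique[of k] h j by (auto simp: m_assoc)
    then show "l0 (inv (ts ! i) \<otimes> g \<otimes> ts ! k) * l0 (inv (ts ! k) \<otimes> h \<otimes> ts ! j) = 0"
      by (simp add: l0_def)
  qed (use k0 in simp_all)
  also have "\<dots> = l0 (inv (ts ! i) \<otimes> (g \<otimes> h) \<otimes> ts ! j)"
  proof -
    have u: "inv (ts ! k0) \<otimes> h \<otimes> ts ! j \<in> H" using k0 h j by (simp add: m_assoc)
    have a: "inv (ts ! i) \<otimes> g \<otimes> ts ! k0 \<in> carrier G" using i g k0(1) by simp
    have "inv (ts ! i) \<otimes> (g \<otimes> h) \<otimes> ts ! j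
        = (inv (ts ! i) \<otimes> g \<otimes> ts ! k0) \<otimes> (inv (ts ! k0) \<otimes> h \<otimes> ts ! j)"
      using i j k0(1) g h by (simp add: m_assoc)
    then have "l0 (inv (ts ! i) \<otimes> (g \<otimes> h) \<otimes> ts ! j)
        = l0 (inv (ts ! i) \<otimes> g \<otimes> ts ! k0) * l (inv (ts ! k0) \<otimes> h \<otimes> ts ! j)"
      using l0_mult_right[OF a u] by simp
    then show ?thesis using u by (simp add: l0_def[of "inv (ts ! k0) \<otimes> h \<otimes> ts ! j"])
  qed
  finally show "rho (g \<otimes> h) $$ (i, j) = (rho g * rho h) $$ (i, j)" using i j by simp
qed simp_all

lemma rho_one: "rho \<one> = 1\<^sub>m n"
  by (rule eq_matI) (simp_all add: l0_def ts_coset_iff)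

lemma is_rep_rho: "is_rep G n rho"
  unfolding is_rep_def using rho_mult rho_one by simp

text \<open>Every element of \<open>G\<close> is uniquely \<open>t\<^sub>i h\<close> with \<open>h \<in> H\<close>; hence the trace of \<open>rho\<close> is the induced
  character.\<close>

lemma transversal_decomposition: "bij_betw (\<lambda>(i, h). ts ! i \<otimes> h) ({0..<n} \<times> H) (carrier G)"
proof (rule bij_betwI')
  fix p q assume "p \<in> {0..<n} \<times> H" "q \<in> {0..<n} \<times> H"
  then obtain i h j h' where p: "p = (i, h)" "i < n" "h \<in> H" and q: "q = (j, h')" "j < n" "h' \<in> H"
    by auto
  have hc: "h \<in> carrier G" "h' \<in> carrier G" using p q by (simp_all add: H.mem_carrier)
  show "((\<lambda>(i, h). ts ! i \<otimes> h) p = (\<lambda>(i, h). ts ! i \<otimes> h) q) = (p = q)"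
  proof
    assume "(\<lambda>(i, h). ts ! i \<otimes> h) p = (\<lambda>(i, h). ts ! i \<otimes> h) q"
    then have e: "ts ! i \<otimes> h = ts ! j \<otimes> h'" using p q by simp
    have "inv (ts ! i) \<otimes> ts ! j = inv (ts ! i) \<otimes> (ts ! j \<otimes> h') \<otimes> inv h'"
      using p q hc by (simp add: m_assoc)
    also have "\<dots> = h \<otimes> inv h'" unfolding e[symmetric] using p hc by (simp add: m_assoc)
    finally have "inv (ts ! i) \<otimes> ts ! j \<in> H" using p q by (simp add: H.m_closed H.m_inv_closed)
    then have "i = j" using ts_coset_iff[OF p(2) q(2)] by simp
    then show "p = q" using e p q hc by simp
  qed simp
next
  fix p assume "p \<in> {0..<n} \<times> H"
  then show "(\<lambda>(i, h). ts ! i \<otimes> h) p \<in> carrier G" by (auto simp: H.mem_carrier)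
next
  fix g assume g: "g \<in> carrier G"
  then obtain i where "i < n" "inv (ts ! i) \<otimes> g \<in> H" using ts_coset by blast
  then show "\<exists>p \<in> {0..<n} \<times> H. g = (\<lambda>(i, h). ts ! i \<otimes> h) p"
    using g by (intro bexI[of _ "(i, inv (ts ! i) \<otimes> g)"]) simp_all
qed

lemma induce_eq_trace: "g \<in> carrier G \<Longrightarrow> induce G H l g = mat_trace (rho g)"
proof -
  assume g: "g \<in> carrier G"
  have "(\<Sum>y \<in> carrier G. l0 (inv y \<otimes> g \<otimes> y))
      = (\<Sum>p \<in> {0..<n} \<times> H. l0 (inv ((\<lambda>(i, h). ts ! i \<otimes> h) p) \<otimes> g \<otimes> (\<lambda>(i, h). ts ! i \<otimes> h) p))"
    by (rule sum.reindex_bij_betw[OF transversal_decomposition, symmetric])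
  also have "\<dots> = (\<Sum>p \<in> {0..<n} \<times> H. l0 (inv (ts ! fst p) \<otimes> g \<otimes> ts ! fst p))"
  proof (rule sum.cong[OF refl], clarify)
    fix i h assume i: "i \<in> {0..<n}" and h: "h \<in> H"
    then have "inv (ts ! i \<otimes> h) \<otimes> g \<otimes> (ts ! i \<otimes> h) = inv h \<otimes> (inv (ts ! i) \<otimes> g \<otimes> ts ! i) \<otimes> h"
      using g by (simp add: inv_mult_group m_assoc H.mem_carrier)
    then show "l0 (inv (ts ! i \<otimes> h) \<otimes> g \<otimes> (ts ! i \<otimes> h)) = l0 (inv (ts ! fst (i, h)) \<otimes> g \<otimes> ts ! fst (i, h))"
      using l0_conj[OF _ h] i g by simp
  qed
  also have "\<dots> = (\<Sum>i \<in> {0..<n}. \<Sum>h \<in> H. l0 (inv (ts ! i) \<otimes> g \<otimes> ts ! i))"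
    by (rule sum.cartesian_product[of "\<lambda>i h. l0 (inv (ts ! i) \<otimes> g \<otimes> ts ! i)", unfolded split_def, symmetric])
  also have "\<dots> = of_nat (card H) * (\<Sum>i \<in> {0..<n}. l0 (inv (ts ! i) \<otimes> g \<otimes> ts ! i))"
    by (simp add: sum_distrib_left)
  finally show ?thesis
    using g card_H_pos by (simp add: induce_l0 mat_trace_def atLeast0LessThan)
qed

lemma rho_shift_coordinate:
  assumes w: "w \<in> carrier_vec n" and j: "j < n"
  shows "(rho (inv (ts ! j)) *\<^sub>v w) $ 0 = w $ j"
proof -
  have "(rho (inv (ts ! j)) *\<^sub>v w) $ 0 = (\<Sum>k \<in> {0..<n}. l0 (inv (ts ! 0) \<otimes> inv (ts ! j) \<otimes> ts ! k) * w $ k)"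
    by (rule rho_apply[OF w n_pos])
  also have "\<dots> = (\<Sum>k \<in> {0..<n}. l0 (inv (ts ! j) \<otimes> ts ! k) * w $ k)"
    using j by simp
  also have "\<dots> = l0 (inv (ts ! j) \<otimes> ts ! j) * w $ j"
    by (rule sum_single) (use j ts_coset_iff[OF j] in \<open>auto simp: l0_def\<close>)
  finally show ?thesis using j by (simp add: l0_def H.one_closed)
qed

lemma rho_unit_vec:
  assumes k: "k < n"
  shows "rho (ts ! k) *\<^sub>v unit_vec n 0 = unit_vec n k"
proof (rule eq_vecI)
  fix i assume "i < dim_vec (unit_vec n k :: complex vec)"
  then have i: "i < n" by simp
  have "(rho (ts ! k) *\<^sub>v unit_vec n 0) $ i
      = (\<Sum>m \<in> {0..<n}. l0 (inv (ts ! i) \<otimes> ts ! k \<otimes> ts ! m) * unit_vec n 0 $ m)"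
    by (rule rho_apply[OF _ i]) simp
  also have "\<dots> = l0 (inv (ts ! i) \<otimes> ts ! k)"
    by (subst sum_single[of 0]) (use i k n_pos in simp_all)
  also have "\<dots> = unit_vec n k $ i" using i k by (simp add: l0_def ts_coset_iff)
  finally show "(rho (ts ! k) *\<^sub>v unit_vec n 0) $ i = unit_vec n k $ i" .
qed simp

text \<open>For \<open>k \<noteq> 0\<close> Mackey's condition at \<open>t\<^sub>k\<close> provides
  \<open>w \<in> H\<close> such that right translation by \<open>w\<close> multiplies the sum by a factor \<open>c \<noteq> 1\<close>.\<close>

lemma averaging_coefficient:
  assumes mackey: "mackey_condition G H l" and i: "i < n" and k: "k < n"
  shows "(\<Sum>h \<in> H. inverse (l h) * l0 (inv (ts ! i) \<otimes> h \<otimes> ts ! k))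
       = (if i = 0 \<and> k = 0 then of_nat (card H) else 0)"
proof (cases "k = 0")
  case True
  have "inverse (l h) * l0 (inv (ts ! i) \<otimes> h \<otimes> ts ! k) = (if i = 0 then 1 else 0)" if h: "h \<in> H" for h
  proof -
    have "inv (ts ! i) \<otimes> h \<in> H \<longleftrightarrow> inv (ts ! i) \<otimes> ts ! 0 \<in> H"
      using mult_H_right[OF _ h, of "inv (ts ! i)"] i by simp
    then show ?thesis
      using True i h l_nonzero[OF h] ts_coset_iff[OF i n_pos] by (simp add: l0_def H.mem_carrier)
  qed
  then show ?thesis using True by simp
next
  case False
  have "ts ! k \<notin> H" using ts_coset_iff[OF n_pos k] False k by simp
  then obtain w where w: "w \<in> H" "inv (ts ! k) \<otimes> w \<otimes> ts ! k \<in> H"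
    and w_moves: "l (inv (ts ! k) \<otimes> w \<otimes> ts ! k) \<noteq> l w"
    using mackey ts_closed[OF k] unfolding mackey_condition_def by blast
  define F where "F h = inverse (l h) * l0 (inv (ts ! i) \<otimes> h \<otimes> ts ! k)" for h
  define c where "c = inverse (l w) * l (inv (ts ! k) \<otimes> w \<otimes> ts ! k)"
  have c: "c \<noteq> 1" using w_moves l_nonzero[OF w(1)] unfolding c_def by (simp add: field_simps)
  have translate: "bij_betw (\<lambda>h. h \<otimes> w) H H"
    by (rule bij_betwI[where g = "\<lambda>h. h \<otimes> inv w"])
      (use w(1) in \<open>auto simp: H.m_closed H.m_inv_closed H.mem_carrier m_assoc\<close>)
  have "(\<Sum>h \<in> H. F h) = (\<Sum>h \<in> H. F (h \<otimes> w))"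
    by (rule sum.reindex_bij_betw[OF translate, symmetric])
  also have "\<dots> = (\<Sum>h \<in> H. F h * c)"
  proof (rule sum.cong[OF refl])
    fix h assume h: "h \<in> H"
    have hc: "h \<in> carrier G" and wc: "w \<in> carrier G" using h w(1) by (simp_all add: H.mem_carrier)
    have "inv (ts ! i) \<otimes> (h \<otimes> w) \<otimes> ts ! k = (inv (ts ! i) \<otimes> h \<otimes> ts ! k) \<otimes> (inv (ts ! k) \<otimes> w \<otimes> ts ! k)"
      using hc wc i k by (simp add: m_assoc)
    then have "l0 (inv (ts ! i) \<otimes> (h \<otimes> w) \<otimes> ts ! k)
        = l0 (inv (ts ! i) \<otimes> h \<otimes> ts ! k) * l (inv (ts ! k) \<otimes> w \<otimes> ts ! k)"
      using l0_mult_right[OF _ w(2)] hc i k by simp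
    moreover have "inverse (l (h \<otimes> w)) = inverse (l h) * inverse (l w)" using l_mult[OF h w(1)] by simp
    ultimately show "F (h \<otimes> w) = F h * c" unfolding F_def c_def by simp
  qed
  also have "\<dots> = (\<Sum>h \<in> H. F h) * c" by (simp add: sum_distrib_right)
  finally have "(\<Sum>h \<in> H. F h) * (1 - c) = 0" by (simp add: algebra_simps)
  then show ?thesis using c False unfolding F_def by simp
qed

lemma averaging:
  assumes mackey: "mackey_condition G H l" and u: "u \<in> carrier_vec n"
  shows "finsum_vec TYPE(complex) n (\<lambda>h. inverse (l h) \<cdot>\<^sub>v (rho h *\<^sub>v u)) H
       = (of_nat (card H) * u $ 0) \<cdot>\<^sub>v unit_vec n 0" (is "?avg = _")
proof (rule eq_vecI)
  have avg: "?avg \<in> carrier_vec n"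
    by (rule finsum_vec_closed) (use u in \<open>auto intro: mult_mat_vec_carrier[OF rho_carrier(1)]\<close>)
  then show "dim_vec ?avg = dim_vec ((of_nat (card H) * u $ 0) \<cdot>\<^sub>v (unit_vec n 0 :: complex vec))" by simp
  fix i assume "i < dim_vec ((of_nat (card H) * u $ 0) \<cdot>\<^sub>v (unit_vec n 0 :: complex vec))"
  then have i: "i < n" by simp
  have "?avg $ i = (\<Sum>h \<in> H. \<Sum>k \<in> {0..<n}. inverse (l h) * l0 (inv (ts ! i) \<otimes> h \<otimes> ts ! k) * u $ k)"
    by (subst index_finsum_vec)
      (use i u finite_H in \<open>auto simp: rho_apply sum_distrib_left mult.assoc simp del: index_mult_mat_vec
         intro: mult_mat_vec_carrier[OF rho_carrier(1)]\<close>)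
  also have "\<dots> = (\<Sum>k \<in> {0..<n}. (\<Sum>h \<in> H. inverse (l h) * l0 (inv (ts ! i) \<otimes> h \<otimes> ts ! k)) * u $ k)"
    by (subst sum.swap) (simp add: sum_distrib_right)
  also have "\<dots> = (\<Sum>k \<in> {0..<n}. (if i = 0 \<and> k = 0 then of_nat (card H) else 0) * u $ k)"
    using averaging_coefficient[OF mackey i] by simp
  also have "\<dots> = ((of_nat (card H) * u $ 0) \<cdot>\<^sub>v unit_vec n 0) $ i"
    using i n_pos by (simp add: sum.delta if_distrib[of "\<lambda>x. x * _"] cong: if_cong)
  finally show "?avg $ i = ((of_nat (card H) * u $ 0) \<cdot>\<^sub>v unit_vec n 0) $ i" .
qed

text \<open>Mackey's criterion: a nonzero invariant subspace contains, after translating and averaging,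
  the vector \<open>e\<^sub>0\<close>, hence all \<open>e\<^sub>k = rho t\<^sub>k e\<^sub>0\<close>, hence everything.\<close>

theorem irreducible_rho:
  assumes mackey: "mackey_condition G H l"
  shows "irreducible_rep G n rho"
  unfolding irreducible_rep_def
proof (intro conjI allI impI is_rep_rho n_pos)
  fix W assume "is_subspace n W \<and> (\<forall>g \<in> carrier G. \<forall>w \<in> W. rho g *\<^sub>v w \<in> W)"
  then have W: "is_subspace n W" and invariant: "\<And>g w. g \<in> carrier G \<Longrightarrow> w \<in> W \<Longrightarrow> rho g *\<^sub>v w \<in> W"
    by auto
  have W_carrier: "W \<subseteq> carrier_vec n" and W_smult: "\<And>c v. v \<in> W \<Longrightarrow> c \<cdot>\<^sub>v v \<in> W"
    using W unfolding is_subspace_def by auto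
  show "W = {0\<^sub>v n} \<or> W = carrier_vec n"
  proof (cases "W \<subseteq> {0\<^sub>v n}")
    case True
    then show ?thesis using W unfolding is_subspace_def by auto
  next
    case False
    then obtain w where w: "w \<in> W" "w \<noteq> 0\<^sub>v n" by auto
    then obtain j where j: "j < n" "w $ j \<noteq> 0" using W_carrier by (auto simp: vec_eq_iff)
    define u where "u = rho (inv (ts ! j)) *\<^sub>v w"
    have u: "u \<in> W" "u \<in> carrier_vec n" "u $ 0 = w $ j"
      using invariant[OF _ w(1), of "inv (ts ! j)"] rho_shift_coordinate[of w j] w(1) W_carrier j
      unfolding u_def by auto
    define c where "c = of_nat (card H) * u $ 0"
    have "c \<cdot>\<^sub>v unit_vec n 0 \<in> W"
      unfolding c_def averaging[OF mackey u(2), symmetric]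
      by (rule subspace_finsum[OF W finite_H]) (use u(1) in \<open>auto intro: W_smult invariant H.mem_carrier\<close>)
    then have "(inverse c * c) \<cdot>\<^sub>v unit_vec n 0 \<in> W"
      using W_smult[of "c \<cdot>\<^sub>v unit_vec n 0" "inverse c"] by (simp add: smult_smult_assoc)
    moreover have "c \<noteq> 0" using u(3) j card_H_pos unfolding c_def by simp
    ultimately have e0: "unit_vec n 0 \<in> W" by simp
    have units: "unit_vec n k \<in> W" if "k < n" for k
      using invariant[OF ts_closed[OF that] e0] rho_unit_vec[OF that] by simp
    have "carrier_vec n \<subseteq> W"
    proof
      fix v :: "complex vec" assume "v \<in> carrier_vec n"
      then show "v \<in> W"
        by (subst vec_unit_expansion) (auto intro!: subspace_finsum[OF W] W_smult units)
    qed
    then show ?thesis using W_carrier by auto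
  qed
qed

end

context subgroup_char
begin

theorem mackey_irreducible:
  assumes "mackey_condition G H l"
  shows "irreducible_char G (induce G H l)"
proof -
  obtain ts where "left_transversal ts" using left_transversal_exists ..
  then interpret induced_rep G H l ts by unfold_locales
  show ?thesis
    unfolding irreducible_char_def using irreducible_rho[OF assms] induce_eq_trace by blast
qed

end

section \<open>The unipotent group of type \<open>D\<^sub>4\<close>\<close>

text \<open>The
  commutator relations turn multiplication, inversion and conjugation of normal forms into explicit
  polynomial maps on coordinate vectors, computed once and for all below.  Root indices are kept
  as numerals: the simplifier must not rewrite \<open>1\<close> to \<open>Suc 0\<close>.\<close>

declare One_nat_def [simp del]

text \<open>Coordinates of the product \<open>nf d \<cdot> nf e\<close>.\<close>

definition coord_mult :: "(nat \<Rightarrow> 'a) \<Rightarrow> (nat \<Rightarrow> 'a) \<Rightarrow> nat \<Rightarrow> 'a::field" where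
  "coord_mult d e = (\<lambda>i. if i = 1 then (d 1 + e 1)
     else if i = 2 then (d 2 + e 2)
     else if i = 3 then (d 3 + e 3)
     else if i = 4 then (d 4 + e 4)
     else if i = 5 then (- d 3*e 1 + d 5 + e 5)
     else if i = 6 then (- d 3*e 2 + d 6 + e 6)
     else if i = 7 then (- d 4*e 3 + d 7 + e 7)
     else if i = 8 then (- d 3*e 1*e 2 + d 5*e 2 + d 6*e 1 + d 8 + e 8)
     else if i = 9 then (- d 3*d 4*e 1 - d 3*e 1*e 4 + d 5*e 4 - d 7*e 1 + d 9 + e 9)
     else if i = 10 then (d 10 - d 3*d 4*e 2 - d 3*e 2*e 4 + d 6*e 4 - d 7*e 2 + e 10)
     else if i = 11 then (d 10*e 1 + d 11 - d 3*d 4*e 1*e 2 - d 3*e 1*e 2*e 4 + d 5*e 2*e 4 + d 6*e 1*e 4 - d 7*e 1*e 2 + d 8*e 4 + d 9*e 2 + e 11)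
     else if i = 12 then (d 10*e 1*e 3 + d 10*e 5 + d 11*e 3 + d 12 + d 3*d 3*d 4*e 1*e 2 + d 3*d 3*e 1*e 2*e 4 - d 3*d 4*d 5*e 2 - d 3*d 4*d 6*e 1 - d 3*d 4*e 1*e 2*e 3 - d 3*d 4*e 1*e 6 - d 3*d 4*e 2*e 5 - d 3*d 5*e 2*e 4 - d 3*d 6*e 1*e 4 + d 3*d 7*e 1*e 2 + d 3*e 1*e 2*e 7 - d 3*e 1*e 4*e 6 - d 3*e 2*e 4*e 5 + d 5*d 6*e 4 - d 5*d 7*e 2 - d 5*e 2*e 7 + d 5*e 4*e 6 - d 6*d 7*e 1 - d 6*e 1*e 7 + d 6*e 4*e 5 - d 7*e 1*e 2*e 3 - d 7*e 1*e 6 - d 7*e 2*e 5 - d 8*e 7 + d 9*e 2*e 3 + d 9*e 6 + e 12)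
     else 0)"

text \<open>Coordinates of \<open>(nf d)\<^sup>-\<^sup>1\<close>.\<close>

definition coord_inv :: "(nat \<Rightarrow> 'a) \<Rightarrow> nat \<Rightarrow> 'a::field" where
  "coord_inv d = (\<lambda>i. if i = 1 then (- d 1)
     else if i = 2 then (- d 2)
     else if i = 3 then (- d 3)
     else if i = 4 then (- d 4)
     else if i = 5 then (- d 1*d 3 - d 5)
     else if i = 6 then (- d 2*d 3 - d 6)
     else if i = 7 then (- d 3*d 4 - d 7)
     else if i = 8 then (d 1*d 2*d 3 + d 1*d 6 + d 2*d 5 - d 8)
     else if i = 9 then (- d 1*d 7 + d 4*d 5 - d 9)
     else if i = 10 then (- d 10 - d 2*d 7 + d 4*d 6)
     else if i = 11 then (d 1*d 10 + d 1*d 2*d 7 - d 1*d 4*d 6 - d 11 - d 2*d 4*d 5 + d 2*d 9 + d 4*d 8)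
     else if i = 12 then (d 1*d 2*d 3*d 7 + d 1*d 6*d 7 + d 10*d 5 + d 11*d 3 - d 12 + d 2*d 5*d 7 - d 3*d 4*d 8 - d 4*d 5*d 6 + d 6*d 9 - d 7*d 8)
     else 0)"

text \<open>Coordinates of the conjugate \<open>(nf d)\<^sup>-\<^sup>1 x\<^sub>b(v) nf d\<close>.\<close>

definition conj_coords :: "nat \<Rightarrow> 'a \<Rightarrow> (nat \<Rightarrow> 'a) \<Rightarrow> nat \<Rightarrow> 'a::field" where
  "conj_coords b v d = (\<lambda>i. if b = 1 then (if i = 1 then (v)
        else if i = 5 then (d 3*v)
        else if i = 8 then (- d 6*v)
        else if i = 9 then (d 3*d 4*v + d 7*v)
        else if i = 11 then (- d 10*v)
        else if i = 12 then (- d 10*d 3*v + d 3*d 4*d 6*v + d 6*d 7*v) else 0)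
   else if b = 2 then (if i = 2 then (v)
        else if i = 6 then (d 3*v)
        else if i = 8 then (- d 5*v)
        else if i = 10 then (d 3*d 4*v + d 7*v)
        else if i = 11 then (- d 9*v)
        else if i = 12 then (d 3*d 4*d 5*v - d 3*d 9*v + d 5*d 7*v) else 0)
   else if b = 3 then (if i = 3 then (v)
        else if i = 5 then (- d 1*v)
        else if i = 6 then (- d 2*v)
        else if i = 7 then (d 4*v)
        else if i = 8 then (- d 1*d 2*v)
        else if i = 9 then (- d 1*d 4*v)
        else if i = 10 then (- d 2*d 4*v)
        else if i = 11 then (- d 1*d 2*d 4*v)
        else if i = 12 then (d 1*d 10*v + d 1*d 2*d 4*v*v + d 1*d 2*d 7*v - d 1*d 4*d 6*v - d 11*v - d 2*d 4*d 5*v + d 2*d 9*v + d 4*d 8*v) else 0)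
   else if b = 4 then (if i = 4 then (v)
        else if i = 7 then (- d 3*v)
        else if i = 9 then (- d 5*v)
        else if i = 10 then (- d 6*v)
        else if i = 11 then (- d 8*v)
        else if i = 12 then (- d 3*d 8*v - d 5*d 6*v) else 0)
   else if b = 5 then (if i = 5 then (v)
        else if i = 8 then (d 2*v)
        else if i = 9 then (d 4*v)
        else if i = 11 then (d 2*d 4*v)
        else if i = 12 then (- d 10*v - d 2*d 7*v + d 4*d 6*v) else 0)
   else if b = 6 then (if i = 6 then (v)
        else if i = 8 then (d 1*v)
        else if i = 10 then (d 4*v)
        else if i = 11 then (d 1*d 4*v)
        else if i = 12 then (- d 1*d 7*v + d 4*d 5*v - d 9*v) else 0)
   else if b = 7 then (if i = 7 then (v)
        else if i = 9 then (- d 1*v)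
        else if i = 10 then (- d 2*v)
        else if i = 11 then (- d 1*d 2*v)
        else if i = 12 then (- d 1*d 2*d 3*v - d 1*d 6*v - d 2*d 5*v + d 8*v) else 0)
   else if b = 8 then (if i = 8 then (v)
        else if i = 11 then (d 4*v)
        else if i = 12 then (- d 7*v) else 0)
   else if b = 9 then (if i = 9 then (v)
        else if i = 11 then (d 2*v)
        else if i = 12 then (d 2*d 3*v + d 6*v) else 0)
   else if b = 10 then (if i = 10 then (v)
        else if i = 11 then (d 1*v)
        else if i = 12 then (d 1*d 3*v + d 5*v) else 0)
   else if b = 11 then (if i = 11 then (v)
        else if i = 12 then (d 3*v) else 0)
   else if b = 12 then (if i = 12 then (v) else 0)
   else 0)"

definition root_coords :: "nat \<Rightarrow> 'a \<Rightarrow> nat \<Rightarrow> 'a::zero" where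
  "root_coords b v = (\<lambda>i. if i = b then v else 0)"

lemma roots_enum: "{1..12::nat} = {1,2,3,4,5,6,7,8,9,10,11,12}"
  by (simp add: set_eq_iff; presburger)

locale d4 =
  fixes G :: "('g, 'b) monoid_scheme" (structure) and x :: "nat \<Rightarrow> 'a::{field,finite} \<Rightarrow> 'g"
  assumes U: "is_U_D4 G x"
begin

sublocale group G using U unfolding is_U_D4_def by blast

lemma x_closed [simp]: "1 \<le> i \<Longrightarrow> i \<le> 12 \<Longrightarrow> x i t \<in> carrier G"
  using U unfolding is_U_D4_def by auto

lemma x_add: "1 \<le> i \<Longrightarrow> i \<le> 12 \<Longrightarrow> x i t \<otimes> x i u = x i (t + u)"
  using U unfolding is_U_D4_def by auto

lemma x_zero [simp]: "1 \<le> i \<Longrightarrow> i \<le> 12 \<Longrightarrow> x i 0 = \<one>"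
  using x_add[of i 0 0] by (metis add_0 l_cancel_one' x_closed)

lemma x_inv [simp]: "1 \<le> i \<Longrightarrow> i \<le> 12 \<Longrightarrow> inv (x i t) = x i (- t)"
  by (metis inv_equality x_add add.left_inverse x_zero x_closed)

lemma x_comm: "1 \<le> i \<Longrightarrow> i < j \<Longrightarrow> j \<le> 12 \<Longrightarrow> comm G (x i t) (x j u) =
    (case cr i j of Some (k, c) \<Rightarrow> x k (of_int c * t * u) | None \<Rightarrow> \<one>)"
  using U unfolding is_U_D4_def by auto

lemma comm_closed:
  "1 \<le> i \<Longrightarrow> i \<le> 12 \<Longrightarrow> 1 \<le> j \<Longrightarrow> j \<le> 12 \<Longrightarrow> comm G (x i t) (x j u) \<in> carrier G"
  unfolding comm_def by simp

text \<open>Moving a root element of larger index past one of smaller index produces a commutator.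
  Used as rewrite rules these sort any word in root elements into normal form.\<close>

lemma swap_roots:
  assumes "1 \<le> i" "i < j" "j \<le> 12"
  shows "x j u \<otimes> x i t = x i t \<otimes> (x j u \<otimes> inv (comm G (x i t) (x j u)))"
  using assms by (simp add: commutator_swap)

lemma swap_roots_assoc:
  assumes "1 \<le> i" "i < j" "j \<le> 12" "r \<in> carrier G"
  shows "x j u \<otimes> (x i t \<otimes> r) = x i t \<otimes> (x j u \<otimes> (inv (comm G (x i t) (x j u)) \<otimes> r))"
  using assms swap_roots[of i j u t] comm_closed[of i j t u] by (simp add: m_assoc[symmetric])

lemma merge_roots:
  "1 \<le> i \<Longrightarrow> i \<le> 12 \<Longrightarrow> r \<in> carrier G \<Longrightarrow> x i t \<otimes> (x i u \<otimes> r) = x i (t + u) \<otimes> r"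
  by (simp add: m_assoc[symmetric] x_add)

lemmas commute_roots = swap_roots swap_roots_assoc merge_roots x_add x_comm

lemma nf_expand: "nf G x d = x 1 (d 1) \<otimes> (x 2 (d 2) \<otimes> (x 3 (d 3) \<otimes> (x 4 (d 4) \<otimes> (x 5 (d 5) \<otimes> (x 6 (d 6) \<otimes>
   (x 7 (d 7) \<otimes> (x 8 (d 8) \<otimes> (x 9 (d 9) \<otimes> (x 10 (d 10) \<otimes> (x 11 (d 11) \<otimes> x 12 (d 12)))))))))))"
proof -
  have "[1..<13] = [1,2,3,4,5,6,7,8,9,10,11,12::nat]" by (simp add: upt_rec numeral_eq_Suc One_nat_def)
  then show ?thesis unfolding nf_def by simp
qed

lemma nf_cong12:
  "p 1 = q 1 \<Longrightarrow> p 2 = q 2 \<Longrightarrow> p 3 = q 3 \<Longrightarrow> p 4 = q 4 \<Longrightarrow> p 5 = q 5 \<Longrightarrow> p 6 = q 6 \<Longrightarrow>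
   p 7 = q 7 \<Longrightarrow> p 8 = q 8 \<Longrightarrow> p 9 = q 9 \<Longrightarrow> p 10 = q 10 \<Longrightarrow> p 11 = q 11 \<Longrightarrow> p 12 = q 12 \<Longrightarrow>
   nf G x p = nf G x q"
  unfolding nf_expand by simp

lemma nf_closed [simp]: "nf G x d \<in> carrier G"
  unfolding nf_expand by simp

lemma nf_zero: "nf G x (\<lambda>_. 0) = \<one>"
  unfolding nf_expand by simp

lemma nf_mult: "nf G x d \<otimes> nf G x e = nf G x (coord_mult d e)"
  unfolding nf_expand coord_mult_def
  by (simp add: m_assoc commute_roots cr_def algebra_simps)

lemma nf_inv: "inv (nf G x d) = nf G x (coord_inv d)"
proof -
  have "nf G x (coord_inv d) \<otimes> nf G x d = nf G x (\<lambda>_. 0)"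
    unfolding nf_mult by (rule nf_cong12) (simp_all add: coord_mult_def coord_inv_def algebra_simps)
  then show ?thesis using nf_zero by (simp add: inv_equality)
qed

lemma nf_root: "b \<in> {1..12} \<Longrightarrow> nf G x (root_coords b v) = x b v"
  unfolding roots_enum by (elim insertE emptyE) (simp_all add: nf_expand root_coords_def)

lemma conj_coords_mult:
  "b \<in> {1..12} \<Longrightarrow> nf G x (coord_mult (root_coords b v) d) = nf G x (coord_mult d (conj_coords b v d))"
  unfolding roots_enum
  by (elim insertE emptyE; hypsubst; rule nf_cong12; simp add: coord_mult_def conj_coords_def root_coords_def algebra_simps)

lemma conj_root:
  assumes "b \<in> {1..12}"
  shows "inv (nf G x d) \<otimes> x b v \<otimes> nf G x d = nf G x (conj_coords b v d)"
proof -
  have "x b v \<otimes> nf G x d = nf G x d \<otimes> nf G x (conj_coords b v d)"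
    using conj_coords_mult[OF assms] nf_root[OF assms] by (simp add: nf_mult[symmetric])
  then show ?thesis using assms by (simp add: m_assoc)
qed

lemma nf_onto: "g \<in> carrier G \<Longrightarrow> \<exists>d. g = nf G x d"
  using U unfolding is_U_D4_def bij_betw_def by auto

lemma finite_carrier: "finite (carrier G)"
proof -
  have "finite {d :: nat \<Rightarrow> 'a. \<forall>i. (i \<in> {1..12} \<longrightarrow> d i \<in> UNIV) \<and> (i \<notin> {1..12} \<longrightarrow> d i = 0)}"
    by (rule finite_set_of_finite_funs) simp_all
  then have "finite (coords :: (nat \<Rightarrow> 'a) set)"
    unfolding coords_def by (rule finite_subset[rotated]) auto
  moreover have "carrier G = nf G x ` coords" using U unfolding is_U_D4_def bij_betw_def by simp
  ultimately show ?thesis by simp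
qed

end

section \<open>Roots: heights, hooks and legs\<close>

lemma posroots_enum: "posroots = {1,2,3,4,5,6,7,8,9,10,11,12}"
  unfolding posroots_def roots_enum ..

lemma root_coeffs:
  "rc 1 = [1,0,0,0]" "rc 2 = [0,1,0,0]" "rc 3 = [0,0,1,0]" "rc 4 = [0,0,0,1]"
  "rc 5 = [1,0,1,0]" "rc 6 = [0,1,1,0]" "rc 7 = [0,0,1,1]" "rc 8 = [1,1,1,0]"
  "rc 9 = [1,0,1,1]" "rc 10 = [0,1,1,1]" "rc 11 = [1,1,1,1]" "rc 12 = [1,1,2,1]"
  by (simp_all add: rc_def)

lemma heights:
  "ht 1 = 1" "ht 2 = 1" "ht 3 = 1" "ht 4 = 1" "ht 5 = 2" "ht 6 = 2"
  "ht 7 = 2" "ht 8 = 3" "ht 9 = 3" "ht 10 = 3" "ht 11 = 4" "ht 12 = 5"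
  by (simp_all add: ht_def root_coeffs)

lemma Collect_mem_insert: "{g \<in> insert b A. P g} = (if P b then insert b {g \<in> A. P g} else {g \<in> A. P g})"
  by auto

lemma hooks:
  "hook 1 = {1}" "hook 2 = {2}" "hook 3 = {3}" "hook 4 = {4}"
  "hook 5 = {1,3,5}" "hook 6 = {2,3,6}" "hook 7 = {3,4,7}" "hook 8 = {1,2,5,6,8}"
  "hook 9 = {1,4,5,7,9}" "hook 10 = {2,4,6,7,10}" "hook 11 = {1,2,4,8,9,10,11}"
  "hook 12 = {3,5,6,7,8,9,10,11,12}"
  unfolding hook_def posroots_enum Collect_mem_insert by (simp_all add: root_coeffs)

lemma legs:
  "leg 1 = {}" "leg 2 = {}" "leg 3 = {}" "leg 4 = {}" "leg 5 = {1}" "leg 6 = {2}" "leg 7 = {4}"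
  "leg 8 = {1,2}" "leg 9 = {1,4}" "leg 10 = {2,4}" "leg 11 = {1,2,4}" "leg 12 = {3,5,6,7}"
  unfolding leg_def arm_def hooks by auto

section \<open>The subgroups \<open>V\<^sub>\<alpha>\<close>\<close>

definition leg_zero :: "nat \<Rightarrow> (nat \<Rightarrow> 'a::zero) \<Rightarrow> bool" where
  "leg_zero a d \<longleftrightarrow> (\<forall>g \<in> leg a. d g = 0)"

lemma leg_posroots: "leg a \<subseteq> posroots"
  unfolding leg_def hook_def by auto

lemma leg_lower: "a \<in> posroots \<Longrightarrow> g \<in> leg a \<Longrightarrow> ht g < ht a"
  unfolding posroots_enum by (auto simp: legs heights)

lemma conj_coords_self: "a \<in> posroots \<Longrightarrow> conj_coords a t d a = t"
  unfolding posroots_enum by (elim insertE emptyE; simp add: conj_coords_def)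

lemma conj_coords_higher:
  "a \<in> posroots \<Longrightarrow> i \<in> posroots \<Longrightarrow> i \<noteq> a \<Longrightarrow> \<not> ht a < ht i \<Longrightarrow> conj_coords a t d i = 0"
  unfolding posroots_enum by (elim insertE emptyE; simp add: conj_coords_def heights)

context d4
begin

lemma nf_in_V: "leg_zero a d \<Longrightarrow> nf G x d \<in> Vsub G x a"
proof -
  assume d: "leg_zero a d"
  define d' where "d' i = (if i \<in> {1..12} then d i else 0)" for i
  have "d' \<in> coords" unfolding coords_def d'_def by simp
  moreover have "\<forall>g \<in> leg a. d' g = 0"
    using d leg_posroots unfolding leg_zero_def d'_def posroots_def by auto
  ultimately have "nf G x d' \<in> Vsub G x a" unfolding Vsub_def by blast
  moreover have "nf G x d' = nf G x d" by (rule nf_cong12) (simp_all add: d'_def)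
  ultimately show ?thesis by simp
qed

lemma V_nf: "y \<in> Vsub G x a \<Longrightarrow> \<exists>d. leg_zero a d \<and> y = nf G x d"
  unfolding Vsub_def leg_zero_def by auto

lemma outside_V: "y \<in> carrier G \<Longrightarrow> y \<notin> Vsub G x a \<Longrightarrow> \<exists>d. y = nf G x d \<and> \<not> leg_zero a d"
  using nf_onto nf_in_V by blast

lemma root_in_V: "b \<in> posroots \<Longrightarrow> b \<notin> leg a \<Longrightarrow> x b t \<in> Vsub G x a"
  using nf_in_V[of a "root_coords b t"] nf_root[of b t]
  by (simp add: leg_zero_def root_coords_def posroots_def)

lemma leg_zero_mult: "a \<in> posroots \<Longrightarrow> leg_zero a d \<Longrightarrow> leg_zero a e \<Longrightarrow> leg_zero a (coord_mult d e)"
  unfolding posroots_enum leg_zero_def by (elim insertE emptyE; simp add: legs coord_mult_def)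

lemma leg_zero_inv: "a \<in> posroots \<Longrightarrow> leg_zero a d \<Longrightarrow> leg_zero a (coord_inv d)"
  unfolding posroots_enum leg_zero_def by (elim insertE emptyE; simp add: legs coord_inv_def)

lemma subgroup_V:
  assumes a: "a \<in> posroots"
  shows "subgroup (Vsub G x a) G"
proof (rule subgroupI)
  show "Vsub G x a \<subseteq> carrier G" unfolding Vsub_def by auto
  show "Vsub G x a \<noteq> {}" using nf_in_V[of a "\<lambda>_. 0"] by (auto simp: leg_zero_def)
next
  fix y assume "y \<in> Vsub G x a"
  then obtain d where d: "leg_zero a d" and y: "y = nf G x d" using V_nf by blast
  show "inv y \<in> Vsub G x a" unfolding y nf_inv by (rule nf_in_V[OF leg_zero_inv[OF a d]])
next
  fix y z assume "y \<in> Vsub G x a" "z \<in> Vsub G x a"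
  then obtain d e where d: "leg_zero a d" "y = nf G x d" and e: "leg_zero a e" "z = nf G x e"
    using V_nf by metis
  show "y \<otimes> z \<in> Vsub G x a" unfolding d(2) e(2) nf_mult by (rule nf_in_V[OF leg_zero_mult[OF a d(1) e(1)]])
qed

end

section \<open>Linear characters of \<open>V\<^sub>\<alpha>\<close> extending \<open>\<phi>\<^sub>\<alpha>\<^sub>,\<^sub>s\<close>\<close>

locale root_char = d4 G x
  for G :: "('g, 'b) monoid_scheme" (structure) and x :: "nat \<Rightarrow> 'a::{field,finite} \<Rightarrow> 'g" +
  fixes a :: nat and l :: "'g \<Rightarrow> complex" and \<psi> :: "'a \<Rightarrow> complex"
  assumes root: "a \<in> posroots"
    and linear: "linear_char G (Vsub G x a) l"
    and psi_nontrivial: "\<exists>t. \<psi> t \<noteq> 1"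
    and restr: "\<And>t. l (x a t) = \<psi> t"
    and ker: "\<And>g t. g \<in> posroots \<Longrightarrow> ht a < ht g \<Longrightarrow> l (x g t) = 1"
begin

abbreviation V :: "'g set" where "V \<equiv> Vsub G x a"

sublocale V: subgroup_char G V l
  by (intro subgroup_char.intro subgroup_char_axioms.intro is_group subgroup_V root finite_carrier linear)

lemma l_nf:
  assumes "leg_zero a c"
  shows "l (nf G x c) = (\<Prod>i \<in> {1..12}. l (x i (c i)))"
proof -
  have "x i (c i) \<in> V" if "i \<in> {1..12}" for i
    using assms root_in_V[of i a "c i"] that
    by (cases "i \<in> leg a") (auto simp: leg_zero_def posroots_def V.H.one_closed)
  then show ?thesis unfolding nf_expand roots_enum by (simp add: V.l_mult V.H.m_closed)
qed

text \<open>All conjugates of \<open>x\<^sub>a(t)\<close> lie in \<open>V\<close>, where \<open>l\<close> takes the value \<open>\<psi>(t)\<close>: conjugation only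
  adds root elements of larger height, which lie in the kernel of \<open>l\<close>.\<close>

lemma conjugates_of_root:
  assumes y: "y \<in> carrier G"
  shows "inv y \<otimes> x a t \<otimes> y \<in> V \<and> l (inv y \<otimes> x a t \<otimes> y) = \<psi> t"
proof -
  obtain d where "y = nf G x d" using nf_onto[OF y] by blast
  then have conj: "inv y \<otimes> x a t \<otimes> y = nf G x (conj_coords a t d)"
    using conj_root[of a d t] root by (simp add: posroots_def)
  have zero: "conj_coords a t d i = 0" if "i \<in> posroots" "i \<noteq> a" "\<not> ht a < ht i" for i
    using conj_coords_higher[OF root that] .
  have lz: "leg_zero a (conj_coords a t d)"
    unfolding leg_zero_def
  proof
    fix g assume g: "g \<in> leg a"
    show "conj_coords a t d g = 0" using zero[of g] g leg_posroots leg_lower[OF root g] by auto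
  qed
  have "l (nf G x (conj_coords a t d)) = (\<Prod>i \<in> {1..12}. if i = a then \<psi> t else 1)"
    unfolding l_nf[OF lz]
  proof (rule prod.cong[OF refl])
    fix i :: nat assume i: "i \<in> {1..12}"
    then have i_root: "i \<in> posroots" by (simp add: posroots_def)
    show "l (x i (conj_coords a t d i)) = (if i = a then \<psi> t else 1)"
    proof (cases "i = a")
      case True
      then show ?thesis by (simp add: restr conj_coords_self[OF root])
    next
      case False
      then show ?thesis using i ker[OF i_root] zero[OF i_root] by (cases "ht a < ht i") simp_all
    qed
  qed
  also have "\<dots> = \<psi> t" using root by (simp add: posroots_def)
  finally show ?thesis using conj nf_in_V[OF lz] by simp
qed

text \<open>A linear character is trivial on commutators, so on root subgroups which arise as
  commutators of two root subgroups contained in \<open>V\<close>.\<close>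

lemma commutator_root_trivial:
  assumes ij: "i \<in> posroots" "j \<in> posroots" "i < j" "i \<notin> leg a" "j \<notin> leg a"
    and c: "cr i j = Some (k, c)" "c = 1 \<or> c = -1"
  shows "l (x k z) = 1"
proof -
  define t where "t = z * of_int c"
  have "(of_int c :: 'a) * of_int c = 1" using c(2) by auto
  then have e: "comm G (x i t) (x j 1) = x k z"
    using x_comm[of i j t 1] ij c(1) unfolding t_def by (simp add: posroots_def mult.assoc mult.left_commute)
  have V: "x i t \<in> V" "x j 1 \<in> V" using root_in_V ij by auto
  have "l (comm G (x i t) (x j 1)) = l (inv (x i t)) * l (inv (x j 1)) * l (x i t) * l (x j 1)"
    unfolding comm_def using V by (simp add: V.l_mult V.H.m_closed V.H.m_inv_closed)
  also have "\<dots> = 1" using V V.l_nonzero[OF V(1)] V.l_nonzero[OF V(2)] by (simp add: V.l_inverse field_simps)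
  finally show ?thesis using e by simp
qed

definition separates :: "'g \<Rightarrow> bool" where
  "separates y \<longleftrightarrow> (\<exists>w \<in> V. inv y \<otimes> w \<otimes> y \<in> V \<and> l (inv y \<otimes> w \<otimes> y) \<noteq> l w)"

lemma separates_by_root:
  assumes b: "b \<in> posroots" "b \<notin> leg a" and c: "c \<noteq> 0"
    and stays: "\<And>v. leg_zero a (conj_coords b v d)"
    and l_conj: "\<And>v. l (nf G x (conj_coords b v d)) = l (x b v) * \<psi> (c * v)"
  shows "separates (nf G x d)"
proof -
  obtain t where t: "\<psi> t \<noteq> 1" using psi_nontrivial by blast
  define v where "v = t / c"
  have xb: "x b v \<in> V" using root_in_V[OF b] .
  have conj: "inv (nf G x d) \<otimes> x b v \<otimes> nf G x d = nf G x (conj_coords b v d)"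
    using conj_root b(1) by (simp add: posroots_def)
  have "l (x b v) * \<psi> t \<noteq> l (x b v)" using t V.l_nonzero[OF xb] by simp
  then show ?thesis
    unfolding separates_def using xb conj nf_in_V[OF stays] l_conj[of v] c
    by (intro bexI[of _ "x b v"]) (simp_all add: v_def)
qed

text \<open>For each leg root \<open>\<gamma>\<close> (tried in a fixed order, the earlier leg
  coordinates of \<open>d\<close> being zero) we conjugate \<open>x\<^sub>\<beta>(v)\<close> for the arm root \<open>\<beta> = a - \<gamma>\<close>: this produces the
  factor \<open>x\<^sub>a(\<plusminus>d\<^sub>\<gamma> v)\<close>, and all other new factors lie in the kernel of \<open>l\<close> -- they have larger height
  or are commutators of root elements in \<open>V\<close>.  For \<open>a\<close> simple the leg is empty and \<open>V = U\<close>.\<close>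

lemmas separation_simps = legs leg_zero_def conj_coords_def l_nf roots_enum posroots_enum heights

lemma separates_simple:
  assumes "a \<in> {1,2,3,4}" "\<not> leg_zero a d"
  shows "separates (nf G x d)"
  using assms by (auto simp: leg_zero_def legs)

lemma separates_5:
  assumes a: "a = 5" and d: "\<not> leg_zero a d"
  shows "separates (nf G x d)"
proof -
  have "l (x 6 z) = 1" "l (x 7 z) = 1" for z
    using commutator_root_trivial[of 2 3 6 1 z] commutator_root_trivial[of 3 4 7 1 z]
    by (simp_all add: a legs cr_def posroots_enum)
  note l_values = this restr[unfolded a] ker[unfolded a]
  have "d 1 \<noteq> 0" using d by (simp add: a legs leg_zero_def)
  then show ?thesis
    by (intro separates_by_root[of 3 "- d 1"]) (simp_all add: a l_values separation_simps)
qed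

lemma separates_6:
  assumes a: "a = 6" and d: "\<not> leg_zero a d"
  shows "separates (nf G x d)"
proof -
  have "l (x 5 z) = 1" "l (x 7 z) = 1" for z
    using commutator_root_trivial[of 1 3 5 1 z] commutator_root_trivial[of 3 4 7 1 z]
    by (simp_all add: a legs cr_def posroots_enum)
  note l_values = this restr[unfolded a] ker[unfolded a]
  have "d 2 \<noteq> 0" using d by (simp add: a legs leg_zero_def)
  then show ?thesis
    by (intro separates_by_root[of 3 "- d 2"]) (simp_all add: a l_values separation_simps)
qed

lemma separates_7:
  assumes a: "a = 7" and d: "\<not> leg_zero a d"
  shows "separates (nf G x d)"
proof -
  have "l (x 5 z) = 1" "l (x 6 z) = 1" for z
    using commutator_root_trivial[of 1 3 5 1 z] commutator_root_trivial[of 2 3 6 1 z]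
    by (simp_all add: a legs cr_def posroots_enum)
  note l_values = this restr[unfolded a] ker[unfolded a]
  have "d 4 \<noteq> 0" using d by (simp add: a legs leg_zero_def)
  then show ?thesis
    by (intro separates_by_root[of 3 "d 4"]) (simp_all add: a l_values separation_simps)
qed

lemma separates_8:
  assumes a: "a = 8" and d: "\<not> leg_zero a d"
  shows "separates (nf G x d)"
proof -
  have "l (x 9 z) = 1" "l (x 10 z) = 1" for z
    using commutator_root_trivial[of 4 5 9 "-1" z] commutator_root_trivial[of 4 6 10 "-1" z]
    by (simp_all add: a legs cr_def posroots_enum)
  note l_values = this restr[unfolded a] ker[unfolded a]
  show ?thesis
  proof (cases "d 1 = 0")
    case False
    then show ?thesis by (intro separates_by_root[of 6 "d 1"]) (simp_all add: a l_values separation_simps)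
  next
    case True
    moreover have "d 2 \<noteq> 0" using d True by (simp add: a legs leg_zero_def)
    ultimately show ?thesis by (intro separates_by_root[of 5 "d 2"]) (simp_all add: a l_values separation_simps)
  qed
qed

lemma separates_9:
  assumes a: "a = 9" and d: "\<not> leg_zero a d"
  shows "separates (nf G x d)"
proof -
  have "l (x 8 z) = 1" "l (x 10 z) = 1" for z
    using commutator_root_trivial[of 2 5 8 "-1" z] commutator_root_trivial[of 2 7 10 1 z]
    by (simp_all add: a legs cr_def posroots_enum)
  note l_values = this restr[unfolded a] ker[unfolded a]
  show ?thesis
  proof (cases "d 1 = 0")
    case False
    then show ?thesis by (intro separates_by_root[of 7 "- d 1"]) (simp_all add: a l_values separation_simps)
  next
    case True
    moreover have "d 4 \<noteq> 0" using d True by (simp add: a legs leg_zero_def)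
    ultimately show ?thesis by (intro separates_by_root[of 5 "d 4"]) (simp_all add: a l_values separation_simps)
  qed
qed

lemma separates_10:
  assumes a: "a = 10" and d: "\<not> leg_zero a d"
  shows "separates (nf G x d)"
proof -
  have "l (x 8 z) = 1" "l (x 9 z) = 1" for z
    using commutator_root_trivial[of 1 6 8 "-1" z] commutator_root_trivial[of 1 7 9 1 z]
    by (simp_all add: a legs cr_def posroots_enum)
  note l_values = this restr[unfolded a] ker[unfolded a]
  show ?thesis
  proof (cases "d 2 = 0")
    case False
    then show ?thesis by (intro separates_by_root[of 7 "- d 2"]) (simp_all add: a l_values separation_simps)
  next
    case True
    moreover have "d 4 \<noteq> 0" using d True by (simp add: a legs leg_zero_def)
    ultimately show ?thesis by (intro separates_by_root[of 6 "d 4"]) (simp_all add: a l_values separation_simps)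
  qed
qed

lemma separates_11:
  assumes a: "a = 11" and d: "\<not> leg_zero a d"
  shows "separates (nf G x d)"
proof -
  note l_values = restr[unfolded a] ker[unfolded a]
  consider "d 1 \<noteq> 0" | "d 1 = 0" "d 2 \<noteq> 0" | "d 1 = 0" "d 2 = 0" "d 4 \<noteq> 0"
    using d by (auto simp: a legs leg_zero_def)
  then show ?thesis
  proof cases
    case 1 then show ?thesis by (intro separates_by_root[of 10 "d 1"]) (simp_all add: a l_values separation_simps)
  next
    case 2 then show ?thesis by (intro separates_by_root[of 9 "d 2"]) (simp_all add: a l_values separation_simps)
  next
    case 3 then show ?thesis by (intro separates_by_root[of 8 "d 4"]) (simp_all add: a l_values separation_simps)
  qed
qed

lemma separates_12:
  assumes a: "a = 12" and d: "\<not> leg_zero a d"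
  shows "separates (nf G x d)"
proof -
  have "l (x 11 z) = 1" for z
    using commutator_root_trivial[of 1 10 11 "-1" z] by (simp add: a legs cr_def posroots_enum)
  note l_values = this restr[unfolded a]
  consider "d 3 \<noteq> 0" | "d 3 = 0" "d 5 \<noteq> 0" | "d 3 = 0" "d 5 = 0" "d 6 \<noteq> 0"
    | "d 3 = 0" "d 5 = 0" "d 6 = 0" "d 7 \<noteq> 0"
    using d by (auto simp: a legs leg_zero_def)
  then show ?thesis
  proof cases
    case 1 then show ?thesis by (intro separates_by_root[of 11 "d 3"]) (simp_all add: a l_values separation_simps)
  next
    case 2 then show ?thesis by (intro separates_by_root[of 10 "d 5"]) (simp_all add: a l_values separation_simps)
  next
    case 3 then show ?thesis by (intro separates_by_root[of 9 "d 6"]) (simp_all add: a l_values separation_simps)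
  next
    case 4 then show ?thesis by (intro separates_by_root[of 8 "- d 7"]) (simp_all add: a l_values separation_simps)
  qed
qed

text \<open>Mackey's condition holds for \<open>V\<close> and \<open>l\<close>: every \<open>y \<notin> V\<close> has some nonzero coordinate on the leg.\<close>

lemma mackey_V: "mackey_condition G V l"
  unfolding mackey_condition_def
proof
  fix y assume "y \<in> carrier G - V"
  then obtain d where y: "y = nf G x d" and d: "\<not> leg_zero a d" using outside_V by blast
  have "separates (nf G x d)"
    using root d separates_simple separates_5 separates_6 separates_7 separates_8 separates_9
      separates_10 separates_11 separates_12
    unfolding posroots_enum by blast
  then show "\<exists>w \<in> V. inv y \<otimes> w \<otimes> y \<in> V \<and> l (inv y \<otimes> w \<otimes> y) \<noteq> l w"
    unfolding separates_def y .
qed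

theorem induced_irreducible: "irreducible_char G (induce G V l)"
  by (rule V.mackey_irreducible[OF mackey_V])

lemma induced_degree_nonzero: "induce G V l \<one> \<noteq> 0"
  by (rule V.induce_one_nonzero)

theorem induced_on_root: "induce G V l (x a t) = induce G V l \<one> * \<psi> t"
  using conjugates_of_root root by (intro V.induce_constant_on_class) (simp_all add: posroots_def)

end

lemma nontriv_add_char_scaled:
  assumes "nontriv_add_char \<phi>" "s \<noteq> 0"
  shows "\<exists>t. \<phi> (s * t) \<noteq> 1"
proof -
  obtain b where "\<phi> b \<noteq> 1" using assms(1) unfolding nontriv_add_char_def by blast
  then have "\<phi> (s * (b / s)) \<noteq> 1" using assms(2) by simp
  then show ?thesis ..
qed

lemma nontriv_add_char_separates:
  assumes \<phi>: "nontriv_add_char \<phi>" and eq: "\<And>t. \<phi> (s * t) = \<phi> (s' * t)"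
  shows "s = s'"
proof (rule ccontr)
  assume "s \<noteq> s'"
  then obtain t where t: "\<phi> ((s - s') * t) \<noteq> 1" using nontriv_add_char_scaled[OF \<phi>, of "s - s'"] by auto
  have "\<phi> (s * t) = \<phi> ((s - s') * t) * \<phi> (s' * t)"
    using \<phi> unfolding nontriv_add_char_def by (metis add_diff_cancel_left' diff_add_cancel left_diff_distrib)
  then show False using eq[of t] t \<phi> unfolding nontriv_add_char_def by simp
qed

text \<open>For each \<open>s \<noteq> 0\<close> the character \<open>lam s\<close> satisfies the hypotheses of \<open>root_char\<close> with
  \<open>\<psi> = \<phi>(s \<cdot> _)\<close>; distinctness follows by evaluating on \<open>X\<^sub>a\<close>.\<close>

theorem proposition3p3:
  fixes G :: "('g, 'b) monoid_scheme"
    and x :: "nat \<Rightarrow> 'a::{field,finite} \<Rightarrow> 'g"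
    and \<phi> :: "'a \<Rightarrow> complex"
    and a :: nat
    and lam :: "'a \<Rightarrow> 'g \<Rightarrow> complex"
  assumes U: "is_U_D4 G x"
    and phi: "nontriv_add_char \<phi>"
    and a: "a \<in> posroots"
    and lin: "\<And>s. s \<noteq> 0 \<Longrightarrow> linear_char G (Vsub G x a) (lam s)"
    and restr: "\<And>s t. s \<noteq> 0 \<Longrightarrow> lam s (x a t) = \<phi> (s * t)"
    and ker: "\<And>s g t. s \<noteq> 0 \<Longrightarrow> g \<in> posroots \<Longrightarrow> ht g > ht a \<Longrightarrow> lam s (x g t) = 1"
  shows "inj_on (\<lambda>s. induce G (Vsub G x a) (lam s)) {s. s \<noteq> 0}
    \<and> (\<forall>s. s \<noteq> 0 \<longrightarrow> irreducible_char G (induce G (Vsub G x a) (lam s)))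
    \<and> (\<forall>s t. s \<noteq> 0 \<longrightarrow> induce G (Vsub G x a) (lam s) (x a t)
            = induce G (Vsub G x a) (lam s) \<one>\<^bsub>G\<^esub> * \<phi> (s * t))"
proof -
  have char: "root_char G x a (lam s) (\<lambda>t. \<phi> (s * t))" if s: "s \<noteq> 0" for s
    using U a lin[OF s] nontriv_add_char_scaled[OF phi s] restr[OF s] ker[OF s]
    by (simp add: root_char_def root_char_axioms_def d4_def)
  let ?\<mu> = "\<lambda>s. induce G (Vsub G x a) (lam s)"
  have on_root: "?\<mu> s (x a t) = ?\<mu> s \<one>\<^bsub>G\<^esub> * \<phi> (s * t)" if "s \<noteq> 0" for s t
    using root_char.induced_on_root[OF char[OF that]] .
  have "s = s'" if "s \<noteq> 0" "s' \<noteq> 0" "?\<mu> s = ?\<mu> s'" for s s'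
  proof (rule nontriv_add_char_separates[OF phi])
    fix t
    have "?\<mu> s \<one>\<^bsub>G\<^esub> \<noteq> 0" using root_char.induced_degree_nonzero[OF char[OF that(1)]] .
    then show "\<phi> (s * t) = \<phi> (s' * t)" using on_root[OF that(1)] on_root[OF that(2)] that(3) by simp
  qed
  then have "inj_on ?\<mu> {s. s \<noteq> 0}" by (auto intro: inj_onI)
  then show ?thesis using root_char.induced_irreducible[OF char] on_root by blast
qed

end
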